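(* Let $X$ be a $T_0$-space and consider: (1) $P_S(X)$ is $S^{\ast}$-well-filtered; (2) $P_S(X)$ is a $d^{\ast}$-space; (3) $X$ is $S^{\ast}$-well-filtered; (4) $X$ is weak well-filtered. Then $(1)\Rightarrow(2)\Rightarrow(3)\Rightarrow(4)$. Moreover, if $X$ is coherent (in particular, if $X$ is KC), then $(2)\Leftrightarrow(3)\Leftrightarrow(4)$.
   Context: For a space $X$, the specialization order is $x\le y$ iff $x\in cl\{y\}$; ${\uparrow}$ is taken with respect to it; saturated = upper set in this order. $K(X)$ is the set of nonempty compact saturated subsets of $X$; a family in $K(X)$ is filtered if any two members contain a common member. The Smyth power space $P_S(X)$ is $K(X)$ with the upper Vietoris topology, generated by the sets $\Box U=\{K\in K(X)\mid K\subseteq U\}$ for $U$ open in $X$; its specialization order is reverse inclusion. $X$ is weak well-filtered if for every filtered $\{K_i\}\subseteq K(X)$ and nonempty open $U$, $\bigcap_i K_i\subseteq U$ implies $K_i\subseteq U$ for some $i$. $X$ is $S^{\ast}$-well-filtered if for every filtered $\{K_i\}\subseteq K(X)$, $G\in K(X)$ and nonempty open $U$, $\bigcap_i K_i\cap G\subseteq U$ implies $K_i\cap G\subseteq U$ for some $i$. $X$ is a $d^{\ast}$-space if for every directed $D\subseteq X$, $x\in X$ and nonempty open $U$, $\bigcap_{d\in D}{\uparrow}d\cap{\uparrow}x\subseteq U$ implies ${\uparrow}d\cap{\uparrow}x\subseteq U$ for some $d\in D$. $X$ is coherent if the intersection of any two compact saturated sets is compact; $X$ is KC if every compact subset is closed.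 *)

theory Defs
  imports "HOL-Analysis.Analysis"
begin

definition spec_le :: "'a topology \<Rightarrow> 'a \<Rightarrow> 'a \<Rightarrow> bool" where
  "spec_le X x y \<longleftrightarrow> x \<in> topspace X \<and> y \<in> topspace X \<and> x \<in> X closure_of {y}"

definition upset :: "'a topology \<Rightarrow> 'a set \<Rightarrow> 'a set" where
  "upset X A = {y \<in> topspace X. \<exists>x\<in>A. spec_le X x y}"

definition saturated :: "'a topology \<Rightarrow> 'a set \<Rightarrow> bool" where
  "saturated X A \<longleftrightarrow> A \<subseteq> topspace X \<and> upset X A = A"

definition KX :: "'a topology \<Rightarrow> 'a set set" where
  "KX X = {K. K \<noteq> {} \<and> compactin X K \<and> saturated X K}"

definition filtered_fam :: "'a set set \<Rightarrow> bool" where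
  "filtered_fam F \<longleftrightarrow> F \<noteq> {} \<and> (\<forall>A\<in>F. \<forall>B\<in>F. \<exists>C\<in>F. C \<subseteq> A \<and> C \<subseteq> B)"

definition directed_in :: "'a topology \<Rightarrow> 'a set \<Rightarrow> bool" where
  "directed_in X D \<longleftrightarrow> D \<noteq> {} \<and> D \<subseteq> topspace X \<and>
     (\<forall>a\<in>D. \<forall>b\<in>D. \<exists>c\<in>D. spec_le X a c \<and> spec_le X b c)"

definition smyth :: "'a topology \<Rightarrow> 'a set topology" where
  "smyth X = topology_generated_by {{K \<in> KX X. K \<subseteq> U} | U. openin X U}"

definition weak_well_filtered :: "'a topology \<Rightarrow> bool" where
  "weak_well_filtered X \<longleftrightarrow>
    (\<forall>F U. F \<subseteq> KX X \<and> filtered_fam F \<and> openin X U \<and> U \<noteq> {} \<and> \<Inter>F \<subseteq> U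
       \<longrightarrow> (\<exists>K\<in>F. K \<subseteq> U))"

definition S_star_well_filtered :: "'a topology \<Rightarrow> bool" where
  "S_star_well_filtered X \<longleftrightarrow>
    (\<forall>F G U. F \<subseteq> KX X \<and> filtered_fam F \<and> G \<in> KX X \<and> openin X U \<and> U \<noteq> {}
       \<and> \<Inter>F \<inter> G \<subseteq> U \<longrightarrow> (\<exists>K\<in>F. K \<inter> G \<subseteq> U))"

definition d_star_space :: "'a topology \<Rightarrow> bool" where
  "d_star_space X \<longleftrightarrow>
    (\<forall>D x U. directed_in X D \<and> x \<in> topspace X \<and> openin X U \<and> U \<noteq> {}
       \<and> (\<Inter>d\<in>D. upset X {d}) \<inter> upset X {x} \<subseteq> U
       \<longrightarrow> (\<exists>d\<in>D. upset X {d} \<inter> upset X {x} \<subseteq> U))"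

definition coherent_space :: "'a topology \<Rightarrow> bool" where
  "coherent_space X \<longleftrightarrow>
    (\<forall>A B. compactin X A \<and> saturated X A \<and> compactin X B \<and> saturated X B
       \<longrightarrow> compactin X (A \<inter> B))"

end

theory Submission
  imports Defs
begin

text \<open>
  The specialization order of \<open>P\<^sub>S(X)\<close> is reverse inclusion, so the up-set of
  \<open>K\<close> in \<open>P\<^sub>S(X)\<close> is the box \<open>\<box>K\<close>, directed subsets of \<open>P\<^sub>S(X)\<close> are exactly the filtered
  families in \<open>K(X)\<close>, and the \<open>d\<^sup>*\<close> property of \<open>P\<^sub>S(X)\<close> reads: if
  \<open>\<box>(\<Inter>\<K> \<inter> G) \<subseteq> \<U>\<close> then \<open>\<box>(K \<inter> G) \<subseteq> \<U>\<close> for some \<open>K \<in> \<K>\<close>.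
  For \<open>\<U> = \<box>U\<close> this is \<open>S\<^sup>*\<close>-well-filteredness of \<open>X\<close>, because a saturated set \<open>A\<close> is the union
  of the sets \<open>\<up>y \<in> \<box>A\<close>. In any space, \<open>S\<^sup>*\<close> implies \<open>d\<^sup>*\<close> since the principal filters of a
  directed set form a filtered family in \<open>K(X)\<close>, and it implies weak well-filteredness by taking
  \<open>G\<close> from the family itself.

  Under coherence the sets \<open>K \<inter> G\<close> form a filtered family in \<open>K(X)\<close>, which turns weak
  well-filteredness into \<open>S\<^sup>*\<close>. Moreover weak well-filteredness makes nonempty filtered
  intersections compact, so \<open>\<Inter>\<K> \<inter> G \<in> K(X)\<close> and an open \<open>\<U> \<supseteq> \<box>(\<Inter>\<K> \<inter> G)\<close> contains a box
  \<open>\<box>U\<close> with \<open>U \<supseteq> \<Inter>\<K> \<inter> G\<close>, to which \<open>S\<^sup>*\<close> applies.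
\<close>

section \<open>Specialization order and saturated sets\<close>

lemma spec_le_iff_openin:
  "spec_le X x y \<longleftrightarrow>
     x \<in> topspace X \<and> y \<in> topspace X \<and> (\<forall>U. openin X U \<longrightarrow> x \<in> U \<longrightarrow> y \<in> U)"
  unfolding spec_le_def in_closure_of by auto

lemma spec_le_refl: "x \<in> topspace X \<Longrightarrow> spec_le X x x"
  by (simp add: spec_le_iff_openin)

lemma spec_le_trans: "spec_le X x y \<Longrightarrow> spec_le X y z \<Longrightarrow> spec_le X x z"
  by (simp add: spec_le_iff_openin)

lemma mem_upset_singleton: "y \<in> upset X {x} \<longleftrightarrow> spec_le X x y"
  by (auto simp: upset_def spec_le_iff_openin)

lemma upset_singleton_antimono:
  assumes "spec_le X a b"
  shows "upset X {b} \<subseteq> upset X {a}"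
  using spec_le_trans[OF assms] by (auto simp: mem_upset_singleton)

lemma saturated_iff:
  "saturated X A \<longleftrightarrow> A \<subseteq> topspace X \<and> (\<forall>x y. x \<in> A \<longrightarrow> spec_le X x y \<longrightarrow> y \<in> A)"
  unfolding saturated_def upset_def by (auto intro: spec_le_refl simp: spec_le_iff_openin)

lemma openin_imp_saturated: "openin X U \<Longrightarrow> saturated X U"
  by (auto simp: saturated_iff spec_le_iff_openin dest: openin_subset)

lemma saturated_upward: "saturated X A \<Longrightarrow> x \<in> A \<Longrightarrow> spec_le X x y \<Longrightarrow> y \<in> A"
  unfolding saturated_iff by blast

lemma saturated_subset_topspace: "saturated X A \<Longrightarrow> A \<subseteq> topspace X"
  unfolding saturated_iff by blast

lemma saturated_Inter:
  assumes "\<F> \<noteq> {}" "\<And>A. A \<in> \<F> \<Longrightarrow> saturated X A"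
  shows "saturated X (\<Inter>\<F>)"
  unfolding saturated_iff
proof (intro conjI allI impI)
  obtain A where "A \<in> \<F>"
    using assms(1) by blast
  then show "\<Inter>\<F> \<subseteq> topspace X"
    using saturated_subset_topspace[OF assms(2)] by blast
  fix x y assume "x \<in> \<Inter>\<F>" "spec_le X x y"
  then show "y \<in> \<Inter>\<F>"
    using saturated_upward[OF assms(2)] by blast
qed

lemma saturated_Int: "saturated X A \<Longrightarrow> saturated X B \<Longrightarrow> saturated X (A \<inter> B)"
  using saturated_Inter[of "{A, B}" X] by auto

lemma saturated_upset_singleton: "saturated X (upset X {x})"
  unfolding saturated_iff
proof (intro conjI allI impI)
  show "upset X {x} \<subseteq> topspace X"
    by (auto simp: upset_def)
  fix y z assume "y \<in> upset X {x}" "spec_le X y z"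
  then show "z \<in> upset X {x}"
    unfolding mem_upset_singleton by (rule spec_le_trans)
qed

lemma upset_singleton_subset_saturated: "saturated X A \<Longrightarrow> x \<in> A \<Longrightarrow> upset X {x} \<subseteq> A"
  by (auto simp: saturated_iff mem_upset_singleton)

lemma mem_KX: "K \<in> KX X \<longleftrightarrow> K \<noteq> {} \<and> compactin X K \<and> saturated X K"
  by (simp add: KX_def)

lemma upset_singleton_in_KX:
  assumes "x \<in> topspace X"
  shows "upset X {x} \<in> KX X"
proof -
  have x: "x \<in> upset X {x}"
    using assms by (simp add: mem_upset_singleton spec_le_refl)
  have "compactin X (upset X {x})"
    unfolding compactin_def
  proof (intro conjI allI impI)
    show "upset X {x} \<subseteq> topspace X"
      using saturated_subset_topspace[OF saturated_upset_singleton] .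
    fix \<U> assume \<U>: "(\<forall>U\<in>\<U>. openin X U) \<and> upset X {x} \<subseteq> \<Union>\<U>"
    then obtain U where "U \<in> \<U>" "x \<in> U"
      using x by blast
    moreover have "upset X {x} \<subseteq> U"
      using \<U> \<open>U \<in> \<U>\<close> \<open>x \<in> U\<close> by (auto simp: mem_upset_singleton spec_le_iff_openin)
    ultimately show "\<exists>\<F>. finite \<F> \<and> \<F> \<subseteq> \<U> \<and> upset X {x} \<subseteq> \<Union>\<F>"
      by (intro exI[of _ "{U}"]) auto
  qed
  with x show ?thesis
    by (auto simp: mem_KX saturated_upset_singleton)
qed

lemma saturated_separation:
  assumes "saturated X A" "y \<in> topspace X" "y \<notin> A"
  obtains U where "openin X U" "A \<subseteq> U" "y \<notin> U"
proof -
  have "\<exists>V. openin X V \<and> x \<in> V \<and> y \<notin> V" if "x \<in> A" for x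
  proof -
    have "\<not> spec_le X x y" "x \<in> topspace X"
      using saturated_upward[OF assms(1) that] saturated_subset_topspace[OF assms(1)] assms(3) that
      by blast+
    then show ?thesis
      using assms(2) by (auto simp: spec_le_iff_openin)
  qed
  then obtain V where V: "\<And>x. x \<in> A \<Longrightarrow> openin X (V x) \<and> x \<in> V x \<and> y \<notin> V x"
    by metis
  have "openin X (\<Union>x\<in>A. V x)"
    using V by (intro openin_Union) blast
  moreover have "A \<subseteq> (\<Union>x\<in>A. V x)" "y \<notin> (\<Union>x\<in>A. V x)"
    using V by blast+
  ultimately show thesis
    using that by blast
qed

lemma weak_well_filteredD:
  assumes "weak_well_filtered X" "\<K> \<subseteq> KX X" "filtered_fam \<K>" "openin X U" "U \<noteq> {}"
    "\<Inter>\<K> \<subseteq> U"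
  obtains K where "K \<in> \<K>" "K \<subseteq> U"
proof -
  have "\<exists>K\<in>\<K>. K \<subseteq> U"
    using assms(2-) by (intro assms(1)[unfolded weak_well_filtered_def, rule_format]) simp
  then show thesis
    using that by blast
qed

lemma S_star_well_filteredD:
  assumes "S_star_well_filtered X" "\<K> \<subseteq> KX X" "filtered_fam \<K>" "G \<in> KX X" "openin X U"
    "U \<noteq> {}" "\<Inter>\<K> \<inter> G \<subseteq> U"
  obtains K where "K \<in> \<K>" "K \<inter> G \<subseteq> U"
proof -
  have "\<exists>K\<in>\<K>. K \<inter> G \<subseteq> U"
    using assms(2-) by (intro assms(1)[unfolded S_star_well_filtered_def, rule_format]) simp
  then show thesis
    using that by blast
qed

lemma filtered_famD: "filtered_fam \<K> \<Longrightarrow> A \<in> \<K> \<Longrightarrow> B \<in> \<K> \<Longrightarrow> \<exists>C\<in>\<K>. C \<subseteq> A \<and> C \<subseteq> B"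
  unfolding filtered_fam_def by blast

lemma filtered_fam_nonempty: "filtered_fam \<K> \<Longrightarrow> \<K> \<noteq> {}"
  unfolding filtered_fam_def by blast

lemma directed_inD:
  "directed_in X D \<Longrightarrow> a \<in> D \<Longrightarrow> b \<in> D \<Longrightarrow> \<exists>c\<in>D. spec_le X a c \<and> spec_le X b c"
  unfolding directed_in_def by blast

lemma KX_Int:
  assumes "coherent_space X" "A \<in> KX X" "B \<in> KX X" "A \<inter> B \<noteq> {}"
  shows "A \<inter> B \<in> KX X"
proof -
  have "compactin X A" "saturated X A" "compactin X B" "saturated X B"
    using assms(2,3) by (simp_all add: mem_KX)
  then have "compactin X (A \<inter> B)" "saturated X (A \<inter> B)"
    using assms(1)[unfolded coherent_space_def, rule_format] saturated_Int by simp_all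
  with assms(4) show ?thesis
    by (simp add: mem_KX)
qed

lemma kc_imp_coherent: "kc_space X \<Longrightarrow> coherent_space X"
  unfolding coherent_space_def kc_space_def
  by (auto intro: closed_compactin[of X A "A \<inter> B" for A B])

lemma filtered_fam_image_mono:
  assumes "filtered_fam \<K>" "mono f"
  shows "filtered_fam (f ` \<K>)"
  unfolding filtered_fam_def
proof (intro conjI ballI)
  show "f ` \<K> \<noteq> {}"
    using filtered_fam_nonempty[OF assms(1)] by simp
  fix A B assume "A \<in> f ` \<K>" "B \<in> f ` \<K>"
  then obtain a b where "a \<in> \<K>" "b \<in> \<K>" "A = f a" "B = f b"
    by blast
  moreover obtain c where "c \<in> \<K>" "c \<subseteq> a" "c \<subseteq> b"
    using filtered_famD[OF assms(1) \<open>a \<in> \<K>\<close> \<open>b \<in> \<K>\<close>] by blast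
  moreover have "f c \<subseteq> f a" "f c \<subseteq> f b"
    using monoD[OF assms(2) \<open>c \<subseteq> a\<close>] monoD[OF assms(2) \<open>c \<subseteq> b\<close>] .
  ultimately show "\<exists>C\<in>f ` \<K>. C \<subseteq> A \<and> C \<subseteq> B"
    by blast
qed

lemma filtered_Inter_in_KX:
  assumes "weak_well_filtered X" "\<K> \<subseteq> KX X" "filtered_fam \<K>" "\<Inter>\<K> \<noteq> {}"
  shows "\<Inter>\<K> \<in> KX X"
proof -
  have sat: "saturated X (\<Inter>\<K>)"
    using assms(2) filtered_fam_nonempty[OF assms(3)] by (intro saturated_Inter) (auto simp: mem_KX)
  have "compactin X (\<Inter>\<K>)"
    unfolding compactin_def
  proof (intro conjI allI impI)
    show "\<Inter>\<K> \<subseteq> topspace X"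
      using sat by (rule saturated_subset_topspace)
    fix \<U> assume \<U>: "(\<forall>U\<in>\<U>. openin X U) \<and> \<Inter>\<K> \<subseteq> \<Union>\<U>"
    have "openin X (\<Union>\<U>)"
      using \<U> by (intro openin_Union) blast
    moreover have "\<Union>\<U> \<noteq> {}"
      using \<U> assms(4) by blast
    ultimately obtain K where K: "K \<in> \<K>" "K \<subseteq> \<Union>\<U>"
      using weak_well_filteredD[OF assms(1-3)] \<U> by metis
    then have "compactin X K"
      using assms(2) by (auto simp: mem_KX)
    then obtain \<F> where "finite \<F>" "\<F> \<subseteq> \<U>" "K \<subseteq> \<Union>\<F>"
      using K(2) \<U> unfolding compactin_def by meson
    then show "\<exists>\<F>. finite \<F> \<and> \<F> \<subseteq> \<U> \<and> \<Inter>\<K> \<subseteq> \<Union>\<F>"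
      using K(1) by blast
  qed
  with sat assms(4) show ?thesis
    by (simp add: mem_KX)
qed

section \<open>The Smyth power space\<close>

definition smyth_box :: "'a topology \<Rightarrow> 'a set \<Rightarrow> 'a set set" where
  "smyth_box X U = {K \<in> KX X. K \<subseteq> U}"

lemma mem_smyth_box [simp]: "K \<in> smyth_box X U \<longleftrightarrow> K \<in> KX X \<and> K \<subseteq> U"
  by (simp add: smyth_box_def)

lemma smyth_box_Int: "smyth_box X (A \<inter> B) = smyth_box X A \<inter> smyth_box X B"
  by auto

lemma smyth_box_mono: "A \<subseteq> B \<Longrightarrow> smyth_box X A \<subseteq> smyth_box X B"
  unfolding smyth_box_def by blast

lemma smyth_generated_by_boxes: "smyth X = topology_generated_by {smyth_box X U | U. openin X U}"
  by (simp add: smyth_def smyth_box_def)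

lemma topspace_smyth: "topspace (smyth X) = KX X"
  unfolding smyth_def topology_generated_by_topspace
  by (auto simp: KX_def saturated_def intro!: exI[of _ "topspace X"])

lemma openin_smyth_box: "openin X U \<Longrightarrow> openin (smyth X) (smyth_box X U)"
  unfolding smyth_generated_by_boxes by (rule topology_generated_by_Basis) blast

lemma openin_smyth_contains_box:
  assumes "openin (smyth X) \<U>" "K \<in> \<U>"
  obtains U where "openin X U" "K \<subseteq> U" "smyth_box X U \<subseteq> \<U>"
proof -
  have "generate_topology_on {smyth_box X U | U. openin X U} \<U>"
    using assms(1) unfolding smyth_generated_by_boxes by (rule openin_topology_generated_by)
  then have "\<exists>U. openin X U \<and> K \<subseteq> U \<and> smyth_box X U \<subseteq> \<U>"
    using assms(2)
  proof (induction arbitrary: K)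
    case Empty
    then show ?case by simp
  next
    case (Int a b)
    obtain U where U: "openin X U" "K \<subseteq> U" "smyth_box X U \<subseteq> a"
      using Int.IH(1) Int.prems by blast
    obtain V where V: "openin X V" "K \<subseteq> V" "smyth_box X V \<subseteq> b"
      using Int.IH(2) Int.prems by blast
    have "smyth_box X (U \<inter> V) \<subseteq> a \<inter> b"
      unfolding smyth_box_Int using U(3) V(3) by blast
    with U V show ?case
      by (intro exI[of _ "U \<inter> V"]) (simp add: openin_Int)
  next
    case (UN \<K>)
    then obtain k where "k \<in> \<K>" "K \<in> k"
      by blast
    with UN.IH obtain U where "openin X U" "K \<subseteq> U" "smyth_box X U \<subseteq> k"
      by blast
    with \<open>k \<in> \<K>\<close> show ?case
      by blast
  next
    case (Basis s)
    then show ?case by auto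
  qed
  then show thesis
    using that by blast
qed

lemma spec_le_smyth: "spec_le (smyth X) A B \<longleftrightarrow> A \<in> KX X \<and> B \<in> KX X \<and> B \<subseteq> A"
proof
  assume AB: "spec_le (smyth X) A B"
  then have KX: "A \<in> KX X" "B \<in> KX X"
    by (simp_all add: spec_le_iff_openin topspace_smyth)
  have "B \<subseteq> A"
  proof
    fix y assume "y \<in> B"
    show "y \<in> A"
    proof (rule ccontr)
      assume "y \<notin> A"
      moreover have "y \<in> topspace X"
        using KX(2) \<open>y \<in> B\<close> saturated_subset_topspace by (auto simp: mem_KX)
      moreover have "saturated X A"
        using KX(1) by (simp add: mem_KX)
      ultimately obtain U where U: "openin X U" "A \<subseteq> U" "y \<notin> U"
        using saturated_separation by metis
      then have "openin (smyth X) (smyth_box X U)" "A \<in> smyth_box X U"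
        using KX(1) openin_smyth_box by simp_all
      then have "B \<in> smyth_box X U"
        using AB unfolding spec_le_iff_openin by blast
      with U(3) \<open>y \<in> B\<close> show False
        by auto
    qed
  qed
  with KX show "A \<in> KX X \<and> B \<in> KX X \<and> B \<subseteq> A"
    by blast
next
  assume AB: "A \<in> KX X \<and> B \<in> KX X \<and> B \<subseteq> A"
  have "B \<in> \<U>" if \<U>: "openin (smyth X) \<U>" "A \<in> \<U>" for \<U>
  proof -
    obtain U where "A \<subseteq> U" "smyth_box X U \<subseteq> \<U>"
      using openin_smyth_contains_box[OF \<U>] by metis
    with AB show ?thesis
      by auto
  qed
  with AB show "spec_le (smyth X) A B"
    unfolding spec_le_iff_openin topspace_smyth by blast
qed

lemma upset_smyth: "A \<in> KX X \<Longrightarrow> upset (smyth X) {A} = smyth_box X A"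
  by (auto simp: upset_def topspace_smyth spec_le_smyth)

lemma INT_upset_smyth:
  assumes "\<A> \<subseteq> KX X" "\<A> \<noteq> {}"
  shows "(\<Inter>A\<in>\<A>. upset (smyth X) {A}) = smyth_box X (\<Inter>\<A>)"
proof -
  have "(\<Inter>A\<in>\<A>. upset (smyth X) {A}) = (\<Inter>A\<in>\<A>. smyth_box X A)"
    by (intro INF_cong refl upset_smyth) (use assms(1) in blast)
  also have "\<dots> = smyth_box X (\<Inter>\<A>)"
    using assms(2) unfolding smyth_box_def by blast
  finally show ?thesis .
qed

lemma directed_in_smyth_iff: "directed_in (smyth X) \<D> \<longleftrightarrow> \<D> \<subseteq> KX X \<and> filtered_fam \<D>"
proof
  assume \<D>: "directed_in (smyth X) \<D>"
  then have "\<D> \<subseteq> KX X" "\<D> \<noteq> {}"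
    by (simp_all add: directed_in_def topspace_smyth)
  moreover have "\<exists>C\<in>\<D>. C \<subseteq> A \<and> C \<subseteq> B" if "A \<in> \<D>" "B \<in> \<D>" for A B
    using directed_inD[OF \<D> that] unfolding spec_le_smyth by blast
  ultimately show "\<D> \<subseteq> KX X \<and> filtered_fam \<D>"
    unfolding filtered_fam_def by blast
next
  assume \<D>: "\<D> \<subseteq> KX X \<and> filtered_fam \<D>"
  have "\<exists>C\<in>\<D>. spec_le (smyth X) A C \<and> spec_le (smyth X) B C"
    if AB: "A \<in> \<D>" "B \<in> \<D>" for A B
  proof -
    obtain C where C: "C \<in> \<D>" "C \<subseteq> A" "C \<subseteq> B"
      using filtered_famD[of \<D> A B] \<D> AB by blast
    have "A \<in> KX X" "B \<in> KX X" "C \<in> KX X"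
      using \<D> AB C(1) by blast+
    with C show ?thesis
      by (intro bexI[of _ C]) (simp_all add: spec_le_smyth)
  qed
  with \<D> show "directed_in (smyth X) \<D>"
    unfolding directed_in_def topspace_smyth using filtered_fam_nonempty by blast
qed

lemma smyth_box_subset_imp_subset:
  assumes "saturated X A" "smyth_box X A \<subseteq> smyth_box X U"
  shows "A \<subseteq> U"
proof
  fix y assume "y \<in> A"
  then have y: "y \<in> topspace X"
    using saturated_subset_topspace[OF assms(1)] by blast
  then have "upset X {y} \<in> KX X"
    by (rule upset_singleton_in_KX)
  moreover have "upset X {y} \<subseteq> A"
    using assms(1) \<open>y \<in> A\<close> by (rule upset_singleton_subset_saturated)
  ultimately have "upset X {y} \<in> smyth_box X A"
    by simp
  with assms(2) have "upset X {y} \<in> smyth_box X U"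
    by (rule subsetD)
  then have "upset X {y} \<subseteq> U"
    by simp
  moreover have "y \<in> upset X {y}"
    using y by (simp add: mem_upset_singleton spec_le_refl)
  ultimately show "y \<in> U"
    by blast
qed

lemma upset_smyth_Int:
  "K \<in> KX X \<Longrightarrow> G \<in> KX X \<Longrightarrow> upset (smyth X) {K} \<inter> upset (smyth X) {G} = smyth_box X (K \<inter> G)"
  by (simp add: upset_smyth smyth_box_Int)

lemma INT_upset_smyth_Int:
  assumes "\<K> \<subseteq> KX X" "\<K> \<noteq> {}" "G \<in> KX X"
  shows "(\<Inter>K\<in>\<K>. upset (smyth X) {K}) \<inter> upset (smyth X) {G} = smyth_box X (\<Inter>\<K> \<inter> G)"
  using assms by (simp add: INT_upset_smyth upset_smyth smyth_box_Int)

lemma d_star_smythI: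
  assumes "\<And>\<K> G \<U>. \<lbrakk>\<K> \<subseteq> KX X; filtered_fam \<K>; G \<in> KX X; openin (smyth X) \<U>; \<U> \<noteq> {};
      smyth_box X (\<Inter>\<K> \<inter> G) \<subseteq> \<U>\<rbrakk> \<Longrightarrow> \<exists>K\<in>\<K>. smyth_box X (K \<inter> G) \<subseteq> \<U>"
  shows "d_star_space (smyth X)"
  unfolding d_star_space_def directed_in_smyth_iff topspace_smyth
proof (intro allI impI, elim conjE)
  fix \<K> G \<U>
  assume \<K>: "\<K> \<subseteq> KX X" "filtered_fam \<K>" and G: "G \<in> KX X"
    and \<U>: "openin (smyth X) \<U>" "\<U> \<noteq> {}"
    and sub: "(\<Inter>K\<in>\<K>. upset (smyth X) {K}) \<inter> upset (smyth X) {G} \<subseteq> \<U>"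
  have "smyth_box X (\<Inter>\<K> \<inter> G) \<subseteq> \<U>"
    using sub INT_upset_smyth_Int[OF \<K>(1) filtered_fam_nonempty[OF \<K>(2)] G] by simp
  then obtain K where "K \<in> \<K>" "smyth_box X (K \<inter> G) \<subseteq> \<U>"
    using assms[OF \<K> G \<U>] by blast
  moreover have "K \<in> KX X"
    using \<K>(1) \<open>K \<in> \<K>\<close> by blast
  ultimately show "\<exists>K\<in>\<K>. upset (smyth X) {K} \<inter> upset (smyth X) {G} \<subseteq> \<U>"
    using upset_smyth_Int[OF _ G] by metis
qed

lemma d_star_smythD:
  assumes "d_star_space (smyth X)" "\<K> \<subseteq> KX X" "filtered_fam \<K>" "G \<in> KX X"
    "openin (smyth X) \<U>" "\<U> \<noteq> {}" "smyth_box X (\<Inter>\<K> \<inter> G) \<subseteq> \<U>"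
  obtains K where "K \<in> \<K>" "smyth_box X (K \<inter> G) \<subseteq> \<U>"
proof -
  have "directed_in (smyth X) \<K>"
    using assms(2,3) by (simp add: directed_in_smyth_iff)
  moreover have "(\<Inter>K\<in>\<K>. upset (smyth X) {K}) \<inter> upset (smyth X) {G} \<subseteq> \<U>"
    using assms(7) INT_upset_smyth_Int[OF assms(2) filtered_fam_nonempty[OF assms(3)] assms(4)]
    by simp
  ultimately obtain K where "K \<in> \<K>" "upset (smyth X) {K} \<inter> upset (smyth X) {G} \<subseteq> \<U>"
    using assms(1,4-6) unfolding d_star_space_def topspace_smyth by blast
  moreover have "K \<in> KX X"
    using assms(2) \<open>K \<in> \<K>\<close> by blast
  ultimately show thesis
    using that upset_smyth_Int[OF _ assms(4)] by metis
qed

section \<open>Well-filteredness properties\<close>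

lemma S_star_imp_d_star:
  assumes "S_star_well_filtered Y"
  shows "d_star_space Y"
  unfolding d_star_space_def
proof (intro allI impI, elim conjE)
  fix D x U
  assume D: "directed_in Y D" and x: "x \<in> topspace Y" and U: "openin Y U" "U \<noteq> {}"
    and sub: "(\<Inter>d\<in>D. upset Y {d}) \<inter> upset Y {x} \<subseteq> U"
  let ?\<K> = "(\<lambda>d. upset Y {d}) ` D"
  have "D \<subseteq> topspace Y"
    using D by (simp add: directed_in_def)
  then have "?\<K> \<subseteq> KX Y"
    by (intro image_subsetI upset_singleton_in_KX) blast
  moreover have "filtered_fam ?\<K>"
    unfolding filtered_fam_def
  proof (intro conjI ballI)
    show "?\<K> \<noteq> {}"
      using D by (simp add: directed_in_def)
    fix A B assume "A \<in> ?\<K>" "B \<in> ?\<K>"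
    then obtain a b where ab: "a \<in> D" "b \<in> D" "A = upset Y {a}" "B = upset Y {b}"
      by blast
    then obtain c where "c \<in> D" "spec_le Y a c" "spec_le Y b c"
      using directed_inD[OF D] by blast
    then have "upset Y {c} \<subseteq> A" "upset Y {c} \<subseteq> B"
      unfolding ab by (simp_all add: upset_singleton_antimono)
    with \<open>c \<in> D\<close> show "\<exists>C\<in>?\<K>. C \<subseteq> A \<and> C \<subseteq> B"
      by blast
  qed
  moreover have "\<Inter>?\<K> \<inter> upset Y {x} \<subseteq> U"
    using sub by simp
  ultimately obtain K where "K \<in> ?\<K>" "K \<inter> upset Y {x} \<subseteq> U"
    using S_star_well_filteredD[OF assms _ _ upset_singleton_in_KX[OF x] U] by metis
  then show "\<exists>d\<in>D. upset Y {d} \<inter> upset Y {x} \<subseteq> U"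
    by blast
qed

lemma S_star_imp_weak_well_filtered:
  assumes "S_star_well_filtered X"
  shows "weak_well_filtered X"
  unfolding weak_well_filtered_def
proof (intro allI impI, elim conjE)
  fix \<K> U
  assume \<K>: "\<K> \<subseteq> KX X" "filtered_fam \<K>" and U: "openin X U" "U \<noteq> {}" and sub: "\<Inter>\<K> \<subseteq> U"
  obtain K0 where "K0 \<in> \<K>"
    using filtered_fam_nonempty[OF \<K>(2)] by blast
  moreover have "\<Inter>\<K> \<inter> K0 \<subseteq> U"
    using sub by blast
  ultimately obtain K where "K \<in> \<K>" "K \<inter> K0 \<subseteq> U"
    using S_star_well_filteredD[OF assms \<K> _ U] \<K>(1) by blast
  moreover obtain C where "C \<in> \<K>" "C \<subseteq> K" "C \<subseteq> K0"
    using filtered_famD[OF \<K>(2) \<open>K \<in> \<K>\<close> \<open>K0 \<in> \<K>\<close>] by blast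
  ultimately show "\<exists>K\<in>\<K>. K \<subseteq> U"
    by blast
qed

lemma weak_well_filtered_coherent_imp_S_star:
  assumes "weak_well_filtered X" "coherent_space X"
  shows "S_star_well_filtered X"
  unfolding S_star_well_filtered_def
proof (intro allI impI, elim conjE)
  fix \<K> G U
  assume \<K>: "\<K> \<subseteq> KX X" "filtered_fam \<K>" and G: "G \<in> KX X"
    and U: "openin X U" "U \<noteq> {}" and sub: "\<Inter>\<K> \<inter> G \<subseteq> U"
  show "\<exists>K\<in>\<K>. K \<inter> G \<subseteq> U"
  proof (cases "\<exists>K\<in>\<K>. K \<inter> G = {}")
    case True
    then show ?thesis by blast
  next
    case False
    let ?\<K>G = "(\<lambda>K. K \<inter> G) ` \<K>"
    have "?\<K>G \<subseteq> KX X"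
      using False \<K>(1) KX_Int[OF assms(2) _ G] by blast
    moreover have "filtered_fam ?\<K>G"
      using \<K>(2) by (rule filtered_fam_image_mono) (simp add: mono_def le_infI1)
    moreover have "\<Inter>?\<K>G \<subseteq> U"
      using sub filtered_fam_nonempty[OF \<K>(2)] by auto
    ultimately obtain K where "K \<in> ?\<K>G" "K \<subseteq> U"
      using weak_well_filteredD[OF assms(1) _ _ U] by metis
    then show ?thesis
      by blast
  qed
qed

lemma d_star_smyth_imp_S_star:
  assumes "d_star_space (smyth X)"
  shows "S_star_well_filtered X"
  unfolding S_star_well_filtered_def
proof (intro allI impI, elim conjE)
  fix \<K> G U
  assume \<K>: "\<K> \<subseteq> KX X" "filtered_fam \<K>" and G: "G \<in> KX X"
    and U: "openin X U" "U \<noteq> {}" and sub: "\<Inter>\<K> \<inter> G \<subseteq> U"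
  obtain u where "u \<in> U"
    using U(2) by blast
  have "upset X {u} \<in> KX X"
    using \<open>u \<in> U\<close> openin_subset[OF U(1)] by (intro upset_singleton_in_KX) blast
  moreover have "upset X {u} \<subseteq> U"
    using openin_imp_saturated[OF U(1)] \<open>u \<in> U\<close> by (rule upset_singleton_subset_saturated)
  ultimately have "smyth_box X U \<noteq> {}"
    by (metis empty_iff mem_smyth_box)
  moreover have "smyth_box X (\<Inter>\<K> \<inter> G) \<subseteq> smyth_box X U"
    using sub by (rule smyth_box_mono)
  ultimately obtain K where K: "K \<in> \<K>" "smyth_box X (K \<inter> G) \<subseteq> smyth_box X U"
    using d_star_smythD[OF assms \<K> G openin_smyth_box[OF U(1)]] by metis
  have "K \<in> KX X"
    using K(1) \<K>(1) by blast
  then have "saturated X (K \<inter> G)"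
    using G by (intro saturated_Int) (simp_all add: mem_KX)
  then have "K \<inter> G \<subseteq> U"
    using K(2) by (rule smyth_box_subset_imp_subset)
  with K(1) show "\<exists>K\<in>\<K>. K \<inter> G \<subseteq> U"
    by blast
qed

lemma weak_well_filtered_coherent_imp_d_star_smyth:
  assumes wwf: "weak_well_filtered X" and coherent: "coherent_space X"
  shows "d_star_space (smyth X)"
proof (rule d_star_smythI)
  fix \<K> G \<U>
  assume \<K>: "\<K> \<subseteq> KX X" "filtered_fam \<K>" and G: "G \<in> KX X"
    and \<U>: "openin (smyth X) \<U>" "\<U> \<noteq> {}" and sub: "smyth_box X (\<Inter>\<K> \<inter> G) \<subseteq> \<U>"
  obtain U where U: "openin X U" "U \<noteq> {}" "\<Inter>\<K> \<inter> G \<subseteq> U" "smyth_box X U \<subseteq> \<U>"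
  proof (cases "\<Inter>\<K> \<inter> G = {}")
    case True
    \<comment> \<open>\<open>S\<^sup>*\<close> needs a nonempty \<open>U\<close>: take a box in \<open>\<U>\<close> around any of its members.\<close>
    obtain K where "K \<in> \<U>"
      using \<U>(2) by blast
    then obtain U where "openin X U" "K \<subseteq> U" "smyth_box X U \<subseteq> \<U>"
      using openin_smyth_contains_box[OF \<U>(1)] by metis
    moreover have "K \<noteq> {}"
      using openin_subset[OF \<U>(1)] \<open>K \<in> \<U>\<close> by (auto simp: topspace_smyth mem_KX)
    ultimately show thesis
      using that True by blast
  next
    case False
    then have "\<Inter>\<K> \<inter> G \<in> KX X"
      using KX_Int[OF coherent filtered_Inter_in_KX[OF wwf \<K>] G] by blast
    then have "\<Inter>\<K> \<inter> G \<in> \<U>"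
      using sub by auto
    then obtain U where "openin X U" "\<Inter>\<K> \<inter> G \<subseteq> U" "smyth_box X U \<subseteq> \<U>"
      using openin_smyth_contains_box[OF \<U>(1)] by metis
    then show thesis
      using that False by blast
  qed
  obtain K where "K \<in> \<K>" "K \<inter> G \<subseteq> U"
    using S_star_well_filteredD[OF weak_well_filtered_coherent_imp_S_star[OF wwf coherent] \<K> G U(1-3)]
    by metis
  then show "\<exists>K\<in>\<K>. smyth_box X (K \<inter> G) \<subseteq> \<U>"
    using smyth_box_mono[of "K \<inter> G" U X] U(4) by blast
qed

theorem mainTheorem20:
  fixes X :: "'a topology"
  assumes "t0_space X"
  shows "(S_star_well_filtered (smyth X) \<longrightarrow> d_star_space (smyth X))
       \<and> (d_star_space (smyth X) \<longrightarrow> S_star_well_filtered X)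
       \<and> (S_star_well_filtered X \<longrightarrow> weak_well_filtered X)
       \<and> (coherent_space X \<longrightarrow>
            (d_star_space (smyth X) \<longleftrightarrow> S_star_well_filtered X)
          \<and> (S_star_well_filtered X \<longleftrightarrow> weak_well_filtered X))
       \<and> (kc_space X \<longrightarrow>
            (d_star_space (smyth X) \<longleftrightarrow> S_star_well_filtered X)
          \<and> (S_star_well_filtered X \<longleftrightarrow> weak_well_filtered X))"
proof -
  have coherent_case: "(d_star_space (smyth X) \<longleftrightarrow> S_star_well_filtered X)
      \<and> (S_star_well_filtered X \<longleftrightarrow> weak_well_filtered X)" if "coherent_space X"
    using that d_star_smyth_imp_S_star S_star_imp_weak_well_filtered
      weak_well_filtered_coherent_imp_S_star weak_well_filtered_coherent_imp_d_star_smyth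
    by blast
  show ?thesis
    using coherent_case kc_imp_coherent S_star_imp_d_star d_star_smyth_imp_S_star
      S_star_imp_weak_well_filtered
    by blast
qed

end
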